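(* Let $f\in\mathbb{R}^{d_1\times\cdots\times d_m}$, $f\ge0$, be weakly irreducible, $1<p_1,\ldots,p_m<\infty$, $i\in[m]$ and $\mathbf x,\mathbf y\in\mathcal R^{d-d_i}$ with $0<\mathbf x\le\mathbf y$ and $\mathbf x\ne\mathbf y$. For $\nu\in[m]\setminus\{i\}$ set $J_\nu=\{j_\nu\in[d_\nu]:x_{\nu,j_\nu}=y_{\nu,j_\nu}\}$ and $I_\nu=\{j_\nu\in[d_\nu]:s_{i,\nu,j_\nu}(\mathbf x)=s_{i,\nu,j_\nu}(\mathbf y)\}$; set $J_i=I_i=\{j_i\in[d_i]:\sigma_{i,j_i}(\mathbf x)=\sigma_{i,j_i}(\mathbf y)\}$; and let $J=\bigcup_{\nu\in[m]}\{\nu\}\times J_\nu$, $I=\bigcup_{\nu\in[m]}\{\nu\}\times I_\nu$. Then $I\subset J$, and if $J\ne\emptyset$ then $I\ne J$.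
   Context: $f$ is identified with the multilinear form $f(\mathbf x)=\sum f_{j_1,\ldots,j_m}x_{1,j_1}\cdots x_{m,j_m}$; $\nabla_kf(\mathbf x)$ is the vector of partials $\partial f/\partial x_{k,j_k}$, which does not depend on $\mathbf x_k$, so $\nabla_if(\mathbf x)$ is defined for $\mathbf x\in\mathcal R^{d-d_i}=\prod_{k\ne i}\mathbb{R}^{d_k}$. Inequalities entrywise. $p'=p/(p-1)$; $\psi_q(\mathbf y)_j=|y_j|^{q-1}\mathrm{sign}(y_j)$. For $\mathbf x\in\mathcal R^{d-d_i}$ with $\mathbf x>0$: $\sigma_i(\mathbf x)=\psi_{p_i'}(\nabla_if(\mathbf x))$ with entries $\sigma_{i,j_i}(\mathbf x)$, and for $k\ne i$, $s_{i,k}(\mathbf x)=\psi_{p_k'}\big(\nabla_kf(\mathbf x_1,\ldots,\mathbf x_{i-1},\psi_{p_i'}(\nabla_if(\mathbf x)),\mathbf x_{i+1},\ldots,\mathbf x_m)\big)$ with entries $s_{i,k,j_k}(\mathbf x)$. Weak irreducibility: the undirected graph on $\bigcup_k\{k\}\times[d_k]$ with $(k,j_k)\sim(l,j_l)$ ($k\ne l$) iff $f_{j_1,\ldots,j_m}>0$ for some choice of the remaining indices, is connected. *)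

theory Defs
  imports Complex_Main "HOL-Library.FuncSet"
begin

text \<open>Conventions: modes are indexed 0..m-1, mode k has indices 0..d k - 1.
  A tensor is f :: (nat => nat) => real, evaluated on multi-indices in tidx m d.
  A tuple of vectors is x :: nat => nat => real, x k t being the t-th entry of x_k.\<close>

definition tidx :: "nat \<Rightarrow> (nat \<Rightarrow> nat) \<Rightarrow> (nat \<Rightarrow> nat) set" where
  "tidx m d = PiE {..<m} (\<lambda>k. {..<d k})"

text \<open>Partial gradient of the multilinear form with respect to block k, entry t
  (independent of x k).\<close>
definition mlgrad :: "nat \<Rightarrow> (nat \<Rightarrow> nat) \<Rightarrow> ((nat \<Rightarrow> nat) \<Rightarrow> real) \<Rightarrow> nat
    \<Rightarrow> (nat \<Rightarrow> nat \<Rightarrow> real) \<Rightarrow> nat \<Rightarrow> real" where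
  "mlgrad m d f k x t = (\<Sum>j\<in>{j\<in>tidx m d. j k = t}. f j * (\<Prod>l\<in>{..<m}-{k}. x l (j l)))"

definition hconj :: "real \<Rightarrow> real" where
  "hconj p = p / (p - 1)"

definition psi :: "real \<Rightarrow> real \<Rightarrow> real" where
  "psi q y = \<bar>y\<bar> powr (q - 1) * sgn y"

definition sigma_map :: "nat \<Rightarrow> (nat \<Rightarrow> nat) \<Rightarrow> ((nat \<Rightarrow> nat) \<Rightarrow> real) \<Rightarrow> (nat \<Rightarrow> real)
    \<Rightarrow> nat \<Rightarrow> (nat \<Rightarrow> nat \<Rightarrow> real) \<Rightarrow> nat \<Rightarrow> real" where
  "sigma_map m d f p i x = (\<lambda>t. psi (hconj (p i)) (mlgrad m d f i x t))"

definition s_map :: "nat \<Rightarrow> (nat \<Rightarrow> nat) \<Rightarrow> ((nat \<Rightarrow> nat) \<Rightarrow> real) \<Rightarrow> (nat \<Rightarrow> real)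
    \<Rightarrow> nat \<Rightarrow> nat \<Rightarrow> (nat \<Rightarrow> nat \<Rightarrow> real) \<Rightarrow> nat \<Rightarrow> real" where
  "s_map m d f p i k x = (\<lambda>t. psi (hconj (p k)) (mlgrad m d f k (x(i := sigma_map m d f p i x)) t))"

definition tverts :: "nat \<Rightarrow> (nat \<Rightarrow> nat) \<Rightarrow> (nat \<times> nat) set" where
  "tverts m d = {(k, t). k < m \<and> t < d k}"

definition tedges :: "nat \<Rightarrow> (nat \<Rightarrow> nat) \<Rightarrow> ((nat \<Rightarrow> nat) \<Rightarrow> real) \<Rightarrow> ((nat \<times> nat) \<times> (nat \<times> nat)) set" where
  "tedges m d f = {((k, a), (l, b)). k < m \<and> l < m \<and> k \<noteq> l \<and>
      (\<exists>j\<in>tidx m d. j k = a \<and> j l = b \<and> f j > 0)}"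

definition weakly_irreducible :: "nat \<Rightarrow> (nat \<Rightarrow> nat) \<Rightarrow> ((nat \<Rightarrow> nat) \<Rightarrow> real) \<Rightarrow> bool" where
  "weakly_irreducible m d f \<longleftrightarrow>
     (\<forall>u\<in>tverts m d. \<forall>v\<in>tverts m d. (u, v) \<in> (tedges m d f)\<^sup>*)"

end

theory Submission
  imports Defs
begin

text \<open>For \<open>\<nu> \<noteq> i\<close>, the entry \<open>s\<^sub>i\<^sub>,\<^sub>\<nu>\<close> at \<open>t\<close> is a sum of positive
  terms over the entries of \<open>f\<close> in the slice \<open>j\<^sub>\<nu> = t\<close>, each monotone in \<open>\<sigma>\<^sub>i\<close> and the other
  blocks; so it is unchanged only if all inputs on the support of that slice are unchanged.
  Hence a coordinate in \<open>I\<close> forces equality on every neighbour in the graph of \<open>f\<close>, and via the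
  slice through \<open>(\<nu>, t)\<close> and a block-\<open>i\<close> neighbour also at \<open>(\<nu>, t)\<close> itself: \<open>I \<subseteq> J\<close>.
  If \<open>I = J\<close>, then \<open>J\<close> is closed under neighbours, so by connectedness a nonempty \<open>J\<close> contains
  every coordinate, contradicting \<open>x \<noteq> y\<close>.\<close>

lemma sum_eq_sum_iff_of_le:
  fixes g h :: "'a \<Rightarrow> 'b::ordered_cancel_comm_monoid_add"
  assumes "finite S" "\<And>s. s \<in> S \<Longrightarrow> g s \<le> h s"
  shows "sum g S = sum h S \<longleftrightarrow> (\<forall>s\<in>S. g s = h s)"
  using sum_strict_mono_ex1[of S g h] assms by (force intro: sum.cong)

lemma prod_eq_prod_iff_of_le:
  fixes u v :: "'a \<Rightarrow> 'b::linordered_semidom"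
  assumes "finite L" "\<And>l. l \<in> L \<Longrightarrow> 0 < u l \<and> u l \<le> v l"
  shows "prod u L = prod v L \<longleftrightarrow> (\<forall>l\<in>L. u l = v l)"
proof
  assume eq: "prod u L = prod v L"
  show "\<forall>l\<in>L. u l = v l"
  proof (rule ccontr)
    assume "\<not> (\<forall>l\<in>L. u l = v l)"
    then obtain l where "l \<in> L" "u l < v l" using assms(2) by force
    then have "prod u L < prod v L"
      using assms by (intro prod_mono_strict) (auto intro: less_imp_le less_le_trans)
    with eq show False by simp
  qed
qed (auto intro: prod.cong)

lemma psi_nonneg_eq_powr: "0 \<le> a \<Longrightarrow> psi q a = a powr (q - 1)"
  by (cases "a = 0") (auto simp: psi_def)

lemma psi_pos: "0 < a \<Longrightarrow> 0 < psi q a"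
  by (simp add: psi_nonneg_eq_powr)

lemma psi_mono: "1 < q \<Longrightarrow> 0 \<le> a \<Longrightarrow> a \<le> b \<Longrightarrow> psi q a \<le> psi q b"
  by (simp add: psi_nonneg_eq_powr powr_mono2)

lemma psi_eq_iff: "1 < q \<Longrightarrow> 0 \<le> a \<Longrightarrow> 0 \<le> b \<Longrightarrow> psi q a = psi q b \<longleftrightarrow> a = b"
  using powr_less_mono2[of "q - 1" a b] powr_less_mono2[of "q - 1" b a]
  by (cases a b rule: linorder_cases) (auto simp: psi_nonneg_eq_powr)

lemma hconj_gt_1: "1 < p \<Longrightarrow> 1 < hconj p"
  by (simp add: hconj_def)

lemma tidx_less: "j \<in> tidx m d \<Longrightarrow> l < m \<Longrightarrow> j l < d l"
  by (auto simp: tidx_def PiE_iff)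

lemma finite_tidx: "finite (tidx m d)"
  by (simp add: tidx_def finite_PiE)

lemma mlgrad_nonneg:
  assumes "\<forall>j\<in>tidx m d. 0 \<le> f j" "\<forall>l\<in>{..<m}-{k}. \<forall>s<d l. 0 \<le> z l s"
  shows "0 \<le> mlgrad m d f k z t"
  unfolding mlgrad_def using assms tidx_less
  by (intro sum_nonneg mult_nonneg_nonneg prod_nonneg) auto

lemma mlgrad_pos:
  assumes "\<forall>j\<in>tidx m d. 0 \<le> f j" "\<forall>l\<in>{..<m}-{k}. \<forall>s<d l. 0 < z l s"
    and "j \<in> tidx m d" "j k = t" "0 < f j"
  shows "0 < mlgrad m d f k z t"
proof -
  have "0 < f j * (\<Prod>l\<in>{..<m}-{k}. z l (j l))"
    using assms tidx_less by (intro mult_pos_pos prod_pos) auto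
  also have "\<dots> \<le> mlgrad m d f k z t"
    unfolding mlgrad_def using assms tidx_less finite_tidx
    by (intro member_le_sum mult_nonneg_nonneg prod_nonneg) (auto intro: less_imp_le)
  finally show ?thesis .
qed

lemma mlgrad_mono:
  assumes "\<forall>j\<in>tidx m d. 0 \<le> f j" "\<forall>l\<in>{..<m}-{k}. \<forall>s<d l. 0 \<le> z l s \<and> z l s \<le> w l s"
  shows "mlgrad m d f k z t \<le> mlgrad m d f k w t"
  unfolding mlgrad_def using assms tidx_less
  by (intro sum_mono mult_left_mono prod_mono) auto

lemma mlgrad_eq_iff:
  assumes fnn: "\<forall>j\<in>tidx m d. 0 \<le> f j"
    and zw: "\<forall>l\<in>{..<m}-{k}. \<forall>s<d l. 0 < z l s \<and> z l s \<le> w l s"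
  shows "mlgrad m d f k z t = mlgrad m d f k w t \<longleftrightarrow>
    (\<forall>j\<in>tidx m d. j k = t \<longrightarrow> 0 < f j \<longrightarrow> (\<forall>l\<in>{..<m}-{k}. z l (j l) = w l (j l)))"
proof -
  have term_eq_iff: "f j * (\<Prod>l\<in>{..<m}-{k}. z l (j l)) = f j * (\<Prod>l\<in>{..<m}-{k}. w l (j l))
      \<longleftrightarrow> (0 < f j \<longrightarrow> (\<forall>l\<in>{..<m}-{k}. z l (j l) = w l (j l)))" if "j \<in> tidx m d" for j
    using that fnn zw tidx_less
      prod_eq_prod_iff_of_le[of "{..<m}-{k}" "\<lambda>l. z l (j l)" "\<lambda>l. w l (j l)"]
    by (cases "f j = 0") (auto simp: less_le)
  have "mlgrad m d f k z t = mlgrad m d f k w t \<longleftrightarrow> (\<forall>j\<in>{j\<in>tidx m d. j k = t}.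
      f j * (\<Prod>l\<in>{..<m}-{k}. z l (j l)) = f j * (\<Prod>l\<in>{..<m}-{k}. w l (j l)))"
    unfolding mlgrad_def using fnn zw tidx_less finite_tidx
    by (intro sum_eq_sum_iff_of_le mult_left_mono prod_mono) (auto intro: less_imp_le)
  then show ?thesis using term_eq_iff by auto
qed

lemma weakly_irreducible_slice_pos:
  assumes "weakly_irreducible m d f" "(k, t) \<in> tverts m d" "(l, s) \<in> tverts m d" "k \<noteq> l"
  shows "\<exists>j\<in>tidx m d. j k = t \<and> 0 < f j"
proof -
  have "((k, t), (l, s)) \<in> (tedges m d f)\<^sup>*"
    using assms unfolding weakly_irreducible_def by blast
  then show ?thesis
    by (cases rule: converse_rtranclE) (use assms in \<open>auto simp: tedges_def\<close>)
qed

lemma weakly_irreducible_closed_subset: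
  assumes "weakly_irreducible m d f" "tedges m d f `` S \<subseteq> S" "u \<in> S" "u \<in> tverts m d"
  shows "tverts m d \<subseteq> S"
proof
  fix v assume "v \<in> tverts m d"
  with assms have "v \<in> (tedges m d f)\<^sup>* `` S"
    unfolding weakly_irreducible_def by blast
  then show "v \<in> S" using Image_closed_trancl[OF assms(2)] by simp
qed

locale comparable_points =
  fixes m :: nat and d :: "nat \<Rightarrow> nat" and f :: "(nat \<Rightarrow> nat) \<Rightarrow> real"
    and p :: "nat \<Rightarrow> real" and i :: nat and x y :: "nat \<Rightarrow> nat \<Rightarrow> real"
  assumes f_nonneg: "\<forall>j\<in>tidx m d. 0 \<le> f j"
    and p_gt_1: "\<forall>k<m. 1 < p k"
    and i_less: "i < m"
    and x_pos: "\<forall>k<m. k \<noteq> i \<longrightarrow> (\<forall>t<d k. 0 < x k t)"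
    and x_le_y: "\<forall>k<m. k \<noteq> i \<longrightarrow> (\<forall>t<d k. x k t \<le> y k t)"
    and slice_pos: "\<And>k t. k < m \<Longrightarrow> t < d k \<Longrightarrow> \<exists>j\<in>tidx m d. j k = t \<and> 0 < f j"
begin

abbreviation \<sigma> :: "(nat \<Rightarrow> nat \<Rightarrow> real) \<Rightarrow> nat \<Rightarrow> real" where
  "\<sigma> z \<equiv> sigma_map m d f p i z"

abbreviation lift :: "(nat \<Rightarrow> nat \<Rightarrow> real) \<Rightarrow> nat \<Rightarrow> nat \<Rightarrow> real" where
  "lift z \<equiv> z(i := \<sigma> z)"

definition agree_set :: "(nat \<times> nat) set" where
  "agree_set = {(\<nu>, t). \<nu> < m \<and> t < d \<nu> \<and>
     (if \<nu> = i then \<sigma> x t = \<sigma> y t else x \<nu> t = y \<nu> t)}"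

definition image_agree_set :: "(nat \<times> nat) set" where
  "image_agree_set = {(\<nu>, t). \<nu> < m \<and> t < d \<nu> \<and>
     (if \<nu> = i then \<sigma> x t = \<sigma> y t else s_map m d f p i \<nu> x t = s_map m d f p i \<nu> y t)}"

lemma hconj_p_gt_1: "k < m \<Longrightarrow> 1 < hconj (p k)"
  using p_gt_1 hconj_gt_1 by blast

lemma x_pos_le_y: "\<forall>l\<in>{..<m}-{i}. \<forall>s<d l. 0 < x l s \<and> x l s \<le> y l s"
  using x_pos x_le_y by auto

lemma sigma_pos: "t < d i \<Longrightarrow> 0 < \<sigma> x t"
  using slice_pos[OF i_less] mlgrad_pos[OF f_nonneg] x_pos_le_y
  by (force simp: sigma_map_def intro: psi_pos)

lemma sigma_mono: "\<sigma> x t \<le> \<sigma> y t"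
  using x_pos_le_y unfolding sigma_map_def
  by (intro psi_mono hconj_p_gt_1 i_less mlgrad_nonneg mlgrad_mono f_nonneg)
    (auto intro: less_imp_le)

lemma sigma_eq_iff: "\<sigma> x t = \<sigma> y t \<longleftrightarrow>
    (\<forall>j\<in>tidx m d. j i = t \<longrightarrow> 0 < f j \<longrightarrow> (\<forall>l\<in>{..<m}-{i}. x l (j l) = y l (j l)))"
proof -
  have "0 \<le> mlgrad m d f i x t" "mlgrad m d f i x t \<le> mlgrad m d f i y t"
    using x_pos_le_y by (auto intro!: mlgrad_nonneg mlgrad_mono f_nonneg intro: less_imp_le)
  then have "\<sigma> x t = \<sigma> y t \<longleftrightarrow> mlgrad m d f i x t = mlgrad m d f i y t"
    unfolding sigma_map_def using psi_eq_iff[OF hconj_p_gt_1[OF i_less]] by simp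
  then show ?thesis using mlgrad_eq_iff[OF f_nonneg x_pos_le_y] by simp
qed

lemma lift_pos_le: "\<forall>l\<in>{..<m}-{k}. \<forall>s<d l. 0 < lift x l s \<and> lift x l s \<le> lift y l s"
  using x_pos x_le_y sigma_pos sigma_mono by auto

lemma s_map_eq_iff:
  assumes "k < m"
  shows "s_map m d f p i k x t = s_map m d f p i k y t \<longleftrightarrow>
    (\<forall>j\<in>tidx m d. j k = t \<longrightarrow> 0 < f j \<longrightarrow> (\<forall>l\<in>{..<m}-{k}. lift x l (j l) = lift y l (j l)))"
proof -
  have "0 \<le> mlgrad m d f k (lift x) t" "mlgrad m d f k (lift x) t \<le> mlgrad m d f k (lift y) t"
    using lift_pos_le by (auto intro!: mlgrad_nonneg mlgrad_mono f_nonneg intro: less_imp_le)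
  then have "s_map m d f p i k x t = s_map m d f p i k y t \<longleftrightarrow>
      mlgrad m d f k (lift x) t = mlgrad m d f k (lift y) t"
    unfolding s_map_def using psi_eq_iff[OF hconj_p_gt_1[OF assms]] by simp
  then show ?thesis using mlgrad_eq_iff[OF f_nonneg lift_pos_le] by simp
qed

lemma agree_set_if_edge_from_image_agree_set:
  assumes "((k, a), (l, b)) \<in> tedges m d f" "(k, a) \<in> image_agree_set"
  shows "(l, b) \<in> agree_set"
proof -
  obtain j where j: "j \<in> tidx m d" "j k = a" "j l = b" "0 < f j" and kl: "k < m" "l < m" "k \<noteq> l"
    using assms(1) unfolding tedges_def by auto
  have "lift x l b = lift y l b"
  proof (cases "k = i")
    case True
    then have "\<sigma> x a = \<sigma> y a" using assms(2) by (simp add: image_agree_set_def)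
    then show ?thesis using sigma_eq_iff j kl True by auto
  next
    case False
    then have "s_map m d f p i k x a = s_map m d f p i k y a"
      using assms(2) by (simp add: image_agree_set_def)
    then have "\<forall>l'\<in>{..<m}-{k}. lift x l' (j l') = lift y l' (j l')"
      using s_map_eq_iff[OF kl(1)] j by blast
    then show ?thesis using kl j(3) by blast
  qed
  then show ?thesis using kl j tidx_less by (auto simp: agree_set_def split: if_splits)
qed

lemma image_agree_subset_agree_set: "image_agree_set \<subseteq> agree_set"
proof safe
  fix \<nu> t assume \<nu>t: "(\<nu>, t) \<in> image_agree_set"
  show "(\<nu>, t) \<in> agree_set"
  proof (cases "\<nu> = i")
    case True then show ?thesis using \<nu>t by (simp add: image_agree_set_def agree_set_def)
  next
    case False
    have \<nu>: "\<nu> < m" "t < d \<nu>" using \<nu>t by (auto simp: image_agree_set_def)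
    then obtain j where j: "j \<in> tidx m d" "j \<nu> = t" "0 < f j" using slice_pos by blast
    then have "((\<nu>, t), (i, j i)) \<in> tedges m d f"
      using \<nu> False i_less by (auto simp: tedges_def)
    then have "\<sigma> x (j i) = \<sigma> y (j i)"
      using agree_set_if_edge_from_image_agree_set \<nu>t by (simp add: agree_set_def)
    then show ?thesis using sigma_eq_iff j \<nu> False by (auto simp: agree_set_def)
  qed
qed

lemma image_agree_set_neq:
  assumes "weakly_irreducible m d f" "agree_set \<noteq> {}"
    and "\<exists>k<m. k \<noteq> i \<and> (\<exists>t<d k. x k t \<noteq> y k t)"
  shows "image_agree_set \<noteq> agree_set"
proof
  assume eq: "image_agree_set = agree_set"
  have "tedges m d f `` agree_set \<subseteq> agree_set"
    using agree_set_if_edge_from_image_agree_set by (auto simp: eq)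
  moreover obtain u where "u \<in> agree_set" using assms(2) by blast
  moreover have "agree_set \<subseteq> tverts m d" by (auto simp: agree_set_def tverts_def)
  ultimately have "tverts m d \<subseteq> agree_set"
    using weakly_irreducible_closed_subset[OF assms(1)] by blast
  then show False using assms(3) by (auto simp: tverts_def agree_set_def)
qed

end

theorem lemma4:
  fixes m :: nat and d :: "nat \<Rightarrow> nat" and f :: "(nat \<Rightarrow> nat) \<Rightarrow> real"
    and p :: "nat \<Rightarrow> real" and i :: nat and x y :: "nat \<Rightarrow> nat \<Rightarrow> real"
  assumes dpos: "\<forall>k<m. 0 < d k"
    and fnn: "\<forall>j\<in>tidx m d. 0 \<le> f j"
    and irr: "weakly_irreducible m d f"
    and p: "\<forall>k<m. 1 < p k"
    and i: "i < m"
    and xpos: "\<forall>k<m. k \<noteq> i \<longrightarrow> (\<forall>t<d k. 0 < x k t)"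
    and xy: "\<forall>k<m. k \<noteq> i \<longrightarrow> (\<forall>t<d k. x k t \<le> y k t)"
    and xney: "\<exists>k<m. k \<noteq> i \<and> (\<exists>t<d k. x k t \<noteq> y k t)"
  defines "J \<equiv> {(\<nu>, t). \<nu> < m \<and> t < d \<nu> \<and>
                 (if \<nu> = i then sigma_map m d f p i x t = sigma_map m d f p i y t
                  else x \<nu> t = y \<nu> t)}"
    and "I \<equiv> {(\<nu>, t). \<nu> < m \<and> t < d \<nu> \<and>
                 (if \<nu> = i then sigma_map m d f p i x t = sigma_map m d f p i y t
                  else s_map m d f p i \<nu> x t = s_map m d f p i \<nu> y t)}"
  shows "I \<subseteq> J \<and> (J \<noteq> {} \<longrightarrow> I \<noteq> J)"
proof -
  obtain \<nu> t where \<nu>: "\<nu> < m" "\<nu> \<noteq> i" "t < d \<nu>" using xney by blast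
  \<comment> \<open>Two vertices in different blocks make every slice of \<open>f\<close> nonzero.\<close>
  have "\<exists>j\<in>tidx m d. j k = s \<and> 0 < f j" if "k < m" "s < d k" for k s
  proof (cases "k = i")
    case True
    with \<nu> that show ?thesis by (intro weakly_irreducible_slice_pos[OF irr, of _ _ \<nu> t]) (auto simp: tverts_def)
  next
    case False
    with dpos i that show ?thesis by (intro weakly_irreducible_slice_pos[OF irr, of _ _ i 0]) (auto simp: tverts_def)
  qed
  then interpret comparable_points m d f p i x y
    using fnn p i xpos xy by unfold_locales blast+
  have "J = agree_set" "I = image_agree_set"
    unfolding J_def I_def agree_set_def image_agree_set_def by simp_all
  then show ?thesis
    using image_agree_subset_agree_set image_agree_set_neq[OF irr _ xney] by blast
qed

end
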